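(* Let $D_1,D_2$ be $\mathbb N_0$-valued and $D_1^*,D_2^*$ be $\mathbb N$-valued random variables, $\ell\in\mathbb N$ and $K$ an exploration rule. Then one can couple the $\ell$-step $K$-explorations of a $\mathrm{GWP}(D_1,D_1^* )$-tree and a $\mathrm{GWP}(D_2,D_2^* )$-tree such that they agree with probability at least $$1-d_{\mathrm{TV}}(\mathbb P_{D_1},\mathbb P_{D_2})-\ell\,d_{\mathrm{TV}}(\mathbb P_{D_1^*},\mathbb P_{D_2^*}).$$
   Context: A $\mathrm{GWP}(D,D^* )$-tree is a random rooted tree where the root has a $D$-distributed number of children and every other vertex independently has a $(D^*-1)$-distributed number of children; it is regarded as a rooted multigraph whose weights are determined by the multigraph structure. Generalised graphs allow edges with one endpoint equal to a cemetery $\partial$; for finite $V_0$, the $V_0$-disclosed subgraph has vertex set $V_0$ and all edges with an endpoint in $V_0$, other endpoints replaced by $\partial$. An exploration is a finite rooted generalised graph with a finite sequence of its edges; an exploration rule $K$ is an isomorphism-invariant probability kernel from explorations to edges (possibly "no edge"). The $K$-exploration of a rooted graph starts from the $\{\text{root}\}$-disclosed subgraph and at step $k$ draws $e_k\sim K(\mathfrak E_{k-1},\cdot)$, adds the endpoints of $e_k$ to the disclosed set and records $e_k$. Two explorations agree if an isomorphism of rooted generalised multigraphs maps one to the other including edge sequences. $\mathbb P_D$ denotes the law of $D$. *)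

theory Defs
  imports "HOL-Probability.Probability"
begin

definition dTV :: "nat pmf \<Rightarrow> nat pmf \<Rightarrow> real" where
  "dTV p q = (SUP A. \<bar>measure_pmf.prob p A - measure_pmf.prob q A\<bar>)"

text \<open>Edges carry an identity of type 'e; the endpoints of an edge form a set of at most two
  elements of type 'v option, where None is the cemetery vertex.\<close>

record ('v, 'e) ggraph =
  gverts :: "'v set"
  gedges :: "'e set"
  gends  :: "'e \<Rightarrow> 'v option set"
  groot  :: 'v

type_synonym ('v, 'e) exploration = "('v, 'e) ggraph \<times> 'e list"

definition finite_expl :: "('v, 'e) exploration \<Rightarrow> bool" where
  "finite_expl X \<longleftrightarrow> finite (gverts (fst X)) \<and> finite (gedges (fst X))
      \<and> groot (fst X) \<in> gverts (fst X) \<and> set (snd X) \<subseteq> gedges (fst X)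
      \<and> (\<forall>e \<in> gedges (fst X). gends (fst X) e \<noteq> {}
            \<and> card (gends (fst X) e) \<le> 2 \<and> gends (fst X) e - {None} \<subseteq> Some ` gverts (fst X))"

definition expl_iso ::
  "('v \<Rightarrow> 'w) \<Rightarrow> ('e \<Rightarrow> 'f) \<Rightarrow> ('v, 'e) exploration \<Rightarrow> ('w, 'f) exploration \<Rightarrow> bool" where
  "expl_iso f g X Y \<longleftrightarrow>
      bij_betw f (gverts (fst X)) (gverts (fst Y))
    \<and> bij_betw g (gedges (fst X)) (gedges (fst Y))
    \<and> f (groot (fst X)) = groot (fst Y)
    \<and> (\<forall>e \<in> gedges (fst X). gends (fst Y) (g e) = map_option f ` gends (fst X) e)
    \<and> map g (snd X) = snd Y"

definition expl_agree :: "('v, 'e) exploration \<Rightarrow> ('v, 'e) exploration \<Rightarrow> bool" where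
  "expl_agree X Y \<longleftrightarrow> (\<exists>f g. expl_iso f g X Y)"

text \<open>Explorations are
  represented with vertices and edges labelled by nat lists (every finite exploration
  is isomorphic to such a one).\<close>

type_synonym expl = "(nat list, nat list) exploration"

definition exploration_rule :: "(expl \<Rightarrow> nat list option pmf) \<Rightarrow> bool" where
  "exploration_rule K \<longleftrightarrow>
     (\<forall>X. finite_expl X \<longrightarrow> set_pmf (K X) \<subseteq> insert None (Some ` gedges (fst X)))
   \<and> (\<forall>X Y f g. finite_expl X \<longrightarrow> finite_expl Y \<longrightarrow> expl_iso f g X Y \<longrightarrow>
          K Y = map_pmf (map_option g) (K X))"

text \<open>The edge between butlast w and w is identified with the (non-root) vertex w.\<close>

inductive_set tree_verts :: "(nat list \<Rightarrow> nat) \<Rightarrow> nat list set" for c where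
  root: "[] \<in> tree_verts c"
| child: "v \<in> tree_verts c \<Longrightarrow> i < c v \<Longrightarrow> v @ [i] \<in> tree_verts c"

definition disclosed :: "(nat list \<Rightarrow> nat) \<Rightarrow> nat list set \<Rightarrow> (nat list, nat list) ggraph" where
  "disclosed c V0 = \<lparr> gverts = V0,
      gedges = {w \<in> tree_verts c. w \<noteq> [] \<and> (w \<in> V0 \<or> butlast w \<in> V0)},
      gends = (\<lambda>w. {if butlast w \<in> V0 then Some (butlast w) else None,
                     if w \<in> V0 then Some w else None}),
      groot = [] \<rparr>"

text \<open>One step of the K-exploration: state = (disclosed vertex set, edge sequence, stopped).
  Drawing "no edge" stops the exploration.\<close>

definition expl_step ::
  "(expl \<Rightarrow> nat list option pmf) \<Rightarrow> (nat list \<Rightarrow> nat) \<Rightarrow>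
     nat list set \<times> nat list list \<times> bool \<Rightarrow> (nat list set \<times> nat list list \<times> bool) pmf" where
  "expl_step K c s = (case s of (V, es, stop) \<Rightarrow>
     if stop then return_pmf (V, es, True)
     else map_pmf (\<lambda>e. case e of None \<Rightarrow> (V, es, True)
                             | Some w \<Rightarrow> (V \<union> {butlast w, w}, es @ [w], False))
                  (K (disclosed c V, es)))"

fun expl_state ::
  "(expl \<Rightarrow> nat list option pmf) \<Rightarrow> (nat list \<Rightarrow> nat) \<Rightarrow> nat \<Rightarrow>
     (nat list set \<times> nat list list \<times> bool) pmf" where
  "expl_state K c 0 = return_pmf ({[]}, [], False)"
| "expl_state K c (Suc n) = bind_pmf (expl_state K c n) (expl_step K c)"

definition exploration :: "(expl \<Rightarrow> nat list option pmf) \<Rightarrow> (nat list \<Rightarrow> nat) \<Rightarrow> nat \<Rightarrow> expl pmf" where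
  "exploration K c n = map_pmf (\<lambda>(V, es, _). (disclosed c V, es)) (expl_state K c n)"

definition GWP :: "nat pmf \<Rightarrow> nat pmf \<Rightarrow> (nat list \<Rightarrow> nat) measure" where
  "GWP D Ds = (\<Pi>\<^sub>M v\<in>UNIV. if v = [] then measure_pmf D else measure_pmf (map_pmf (\<lambda>k. k - 1) Ds))"

definition expl_law :: "(expl \<Rightarrow> nat list option pmf) \<Rightarrow> nat pmf \<Rightarrow> nat pmf \<Rightarrow> nat \<Rightarrow> expl measure" where
  "expl_law K D Ds n = Giry_Monad.bind (GWP D Ds) (\<lambda>c. measure_pmf (exploration K c n))"

end

theory Submission
  imports Defs
begin

text \<open>Couple the child numbers of the two trees vertex by vertex, independently over the vertices,
  using maximal couplings: at the root they differ with probability at most dTV(D1, D2), elsewhere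
  with probability at most dTV(D1*, D2*). Run the two K-explorations jointly, identically as long
  as they are in the same state with the same disclosed graph. They can then only disagree after
  the first exploration has disclosed a vertex whose two child numbers differ. Each step discloses
  at most one new vertex, and whether it discloses v is decided without looking at the child
  number of v, hence independently of a mismatch at v. A union bound over the root and the l steps
  gives the claim.\<close>

section \<open>Maximal couplings\<close>

lemma emeasure_pmf_eq_plus_excess:
  fixes p q :: "'a pmf"
  assumes "\<And>x. x \<in> B \<Longrightarrow> pmf q x \<le> pmf p x" and "\<And>x. x \<notin> B \<Longrightarrow> pmf p x \<le> pmf q x"
  shows "emeasure p B = emeasure q B + (\<integral>\<^sup>+x. ennreal (pmf p x - pmf q x) \<partial>count_space UNIV)"
proof -
  have "emeasure p B = (\<integral>\<^sup>+x. ennreal (pmf p x) * indicator B x \<partial>count_space UNIV)"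
    by (simp add: nn_integral_pmf[symmetric] nn_integral_count_space_indicator)
  also have "\<dots>
      = (\<integral>\<^sup>+x. ennreal (pmf q x) * indicator B x + ennreal (pmf p x - pmf q x) \<partial>count_space UNIV)"
    using assms by (intro nn_integral_cong)
      (auto simp: indicator_def ennreal_neg simp flip: ennreal_plus)
  also have "\<dots> = emeasure q B + (\<integral>\<^sup>+x. ennreal (pmf p x - pmf q x) \<partial>count_space UNIV)"
    by (subst nn_integral_add)
      (auto simp: nn_integral_pmf[symmetric] nn_integral_count_space_indicator)
  finally show ?thesis .
qed

lemma ennreal_eq_plus_imp_eq_diff:
  assumes "ennreal a = ennreal b + E" and "0 \<le> b"
  shows "E = ennreal (a - b)"
proof (cases E)
  case (real e)
  then have sum: "ennreal a = ennreal (b + e)" and "0 \<le> b + e"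
    using assms by (simp_all add: ennreal_plus)
  show ?thesis
  proof (cases "0 \<le> a")
    case True
    then have "a = b + e" using sum \<open>0 \<le> b + e\<close> ennreal_inj by blast
    then show ?thesis using real by simp
  next
    case False
    then have "e = 0" using sum real assms(2) by (simp add: ennreal_neg)
    then show ?thesis using real False assms(2) by (simp add: ennreal_neg)
  qed
qed (use assms in simp)

lemma nn_integral_pmf_excess:
  fixes p q :: "'a pmf"
  defines "A \<equiv> {x. pmf q x < pmf p x}"
  shows "(\<integral>\<^sup>+x. ennreal (pmf p x - pmf q x) \<partial>count_space UNIV)
      = ennreal (measure p A - measure q A)"
    and "(\<integral>\<^sup>+x. ennreal (pmf q x - pmf p x) \<partial>count_space UNIV)
      = ennreal (measure p A - measure q A)"
    and "measure q A \<le> measure p A"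
proof -
  have "emeasure p A = emeasure q A + (\<integral>\<^sup>+x. ennreal (pmf p x - pmf q x) \<partial>count_space UNIV)"
    by (rule emeasure_pmf_eq_plus_excess) (auto simp: A_def)
  then have "emeasure q A \<le> emeasure p A" by simp
  then show "measure q A \<le> measure p A" by (simp add: measure_pmf.emeasure_eq_measure)
  from \<open>emeasure p A = _\<close> show "(\<integral>\<^sup>+x. ennreal (pmf p x - pmf q x) \<partial>count_space UNIV)
      = ennreal (measure p A - measure q A)"
    by (intro ennreal_eq_plus_imp_eq_diff) (simp_all add: measure_pmf.emeasure_eq_measure)
  have "emeasure q (- A) = emeasure p (- A) + (\<integral>\<^sup>+x. ennreal (pmf q x - pmf p x) \<partial>count_space UNIV)"
    by (rule emeasure_pmf_eq_plus_excess) (auto simp: A_def)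
  then have "(\<integral>\<^sup>+x. ennreal (pmf q x - pmf p x) \<partial>count_space UNIV)
      = ennreal (measure q (- A) - measure p (- A))"
    by (intro ennreal_eq_plus_imp_eq_diff) (simp_all add: measure_pmf.emeasure_eq_measure)
  then show "(\<integral>\<^sup>+x. ennreal (pmf q x - pmf p x) \<partial>count_space UNIV)
      = ennreal (measure p A - measure q A)"
    using measure_pmf.prob_compl[of A p] measure_pmf.prob_compl[of A q]
      by (simp add: Compl_eq_Diff_UNIV)
qed

lemma ennreal_pmf_map_fst:
  "ennreal (pmf (map_pmf fst C) x) = (\<integral>\<^sup>+y. ennreal (pmf C (x, y)) \<partial>count_space UNIV)"
proof -
  have "(\<integral>\<^sup>+y. ennreal (pmf C (x, y)) \<partial>count_space UNIV) = emeasure C (Pair x ` UNIV)"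
    by (rule nn_integral_pmf') (simp add: inj_on_def)
  also have "Pair x ` UNIV = fst -` {x}" by auto
  finally show ?thesis by (simp add: measure_pmf.emeasure_eq_measure pmf_map)
qed

lemma ennreal_pmf_map_snd:
  "ennreal (pmf (map_pmf snd C) y) = (\<integral>\<^sup>+x. ennreal (pmf C (x, y)) \<partial>count_space UNIV)"
proof -
  have "(\<integral>\<^sup>+x. ennreal (pmf C (x, y)) \<partial>count_space UNIV) = emeasure C ((\<lambda>x. (x, y)) ` UNIV)"
    by (rule nn_integral_pmf') (simp add: inj_on_def)
  also have "(\<lambda>x. (x, y)) ` UNIV = snd -` {y}" by auto
  finally show ?thesis by (simp add: measure_pmf.emeasure_eq_measure pmf_map)
qed

lemma le_nn_integral_count_space: "f x \<le> (\<integral>\<^sup>+y. f y \<partial>count_space UNIV)"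
proof -
  have "f x = (\<integral>\<^sup>+y. f y * indicator {x} y \<partial>count_space UNIV)" by simp
  also have "\<dots> \<le> (\<integral>\<^sup>+y. f y \<partial>count_space UNIV)"
    by (intro nn_integral_mono) (simp split: split_indicator)
  finally show ?thesis .
qed

lemma pmf_embed_pmf_marginals:
  fixes f :: "'a \<times> 'b \<Rightarrow> real"
  assumes nonneg: "\<And>z. 0 \<le> f z"
    and rows: "\<And>x. (\<integral>\<^sup>+y. ennreal (f (x, y)) \<partial>count_space UNIV) = ennreal (pmf p x)"
    and cols: "\<And>y. (\<integral>\<^sup>+x. ennreal (f (x, y)) \<partial>count_space UNIV) = ennreal (pmf q y)"
  shows "pmf (embed_pmf f) = f"
    and "map_pmf fst (embed_pmf f) = p" and "map_pmf snd (embed_pmf f) = q"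
proof -
  have "(\<integral>\<^sup>+z. ennreal (f z) \<partial>count_space UNIV) = 1"
    by (simp add: nn_integral_fst_count_space[symmetric] rows nn_integral_pmf)
  then show pmf_f: "pmf (embed_pmf f) = f"
    using nonneg by (intro ext pmf_embed_pmf) auto
  show "map_pmf fst (embed_pmf f) = p"
    by (rule pmf_eqI) (simp add: ennreal_pmf_map_fst pmf_f rows flip: ennreal_inj)
  show "map_pmf snd (embed_pmf f) = q"
    by (rule pmf_eqI) (simp add: ennreal_pmf_map_snd pmf_f cols flip: ennreal_inj)
qed

lemma nn_integral_diagonal_plus_product:
  fixes e :: "'a \<Rightarrow> real"
  assumes "0 \<le> m" and "0 \<le> a" and "0 \<le> b" and "\<And>y. 0 \<le> e y"
    and mass: "(\<integral>\<^sup>+y. ennreal (e y) \<partial>count_space UNIV) = ennreal b" and "b = 0 \<Longrightarrow> a = 0"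
  shows "(\<integral>\<^sup>+y. ennreal ((if y = x then m else 0) + a * e y / b) \<partial>count_space UNIV)
      = ennreal (m + a)"
proof -
  have "(\<integral>\<^sup>+y. ennreal ((if y = x then m else 0) + a * e y / b) \<partial>count_space UNIV)
      = (\<integral>\<^sup>+y. ennreal m * indicator {x} y + ennreal (a / b) * ennreal (e y) \<partial>count_space UNIV)"
    using assms by (intro nn_integral_cong)
      (auto simp: indicator_def simp flip: ennreal_mult ennreal_plus)
  also have "\<dots> = ennreal m + ennreal (a / b) * ennreal b"
    by (subst nn_integral_add) (auto simp: nn_integral_cmult mass)
  also have "\<dots> = ennreal (m + a)"
    using assms by (cases "b = 0") (auto simp flip: ennreal_mult ennreal_plus)
  finally show ?thesis .
qed

text \<open>Given a common part m of p and q with excesses p - m and q - m of mass b, put m on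
  the diagonal and the product of the excesses, normalised by b, off the diagonal.\<close>

lemma coupling_of_overlap:
  fixes p q :: "'a pmf"
  assumes nonneg: "0 \<le> b" "\<And>x. 0 \<le> m x" "\<And>x. 0 \<le> dp x" "\<And>x. 0 \<le> dq x"
    and p: "\<And>x. pmf p x = m x + dp x" and q: "\<And>x. pmf q x = m x + dq x"
    and E1: "(\<integral>\<^sup>+x. ennreal (dp x) \<partial>count_space UNIV) = ennreal b"
    and E2: "(\<integral>\<^sup>+x. ennreal (dq x) \<partial>count_space UNIV) = ennreal b"
  obtains C where "map_pmf fst C = p" and "map_pmf snd C = q"
    and "measure_pmf.prob C {z. fst z \<noteq> snd z} \<le> b"
proof -
  have vanish: "dp x = 0" "dq x = 0" if "b = 0" for x
    using le_nn_integral_count_space[of "\<lambda>x. ennreal (dp x)" x]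
      le_nn_integral_count_space[of "\<lambda>x. ennreal (dq x)" x] E1 E2 nonneg that
    by auto
  define f where
    "f z = (if fst z = snd z then m (fst z) else 0) + dp (fst z) * dq (snd z) / b" for z
  have rows: "(\<integral>\<^sup>+y. ennreal (f (x, y)) \<partial>count_space UNIV) = ennreal (pmf p x)" for x
  proof -
    have "f (x, y) = (if y = x then m x else 0) + dp x * dq y / b" for y
      by (auto simp: f_def)
    then show ?thesis
      using nn_integral_diagonal_plus_product[of "m x" "dp x" b dq x] nonneg vanish E2 p by simp
  qed
  have cols: "(\<integral>\<^sup>+x. ennreal (f (x, y)) \<partial>count_space UNIV) = ennreal (pmf q y)" for y
  proof -
    have "f (x, y) = (if x = y then m y else 0) + dq y * dp x / b" for x
      by (auto simp: f_def)
    then show ?thesis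
      using nn_integral_diagonal_plus_product[of "m y" "dq y" b dp y] nonneg vanish E1 q by simp
  qed
  have "0 \<le> f z" for z using nonneg by (simp add: f_def)
  note C = pmf_embed_pmf_marginals[OF this rows cols]
  show ?thesis
  proof (rule that[OF C(2,3)])
    have "emeasure (embed_pmf f) {z. fst z \<noteq> snd z}
        = (\<integral>\<^sup>+z. ennreal (f z) * indicator {z. fst z \<noteq> snd z} z \<partial>count_space UNIV)"
      by (simp add: C(1) nn_integral_pmf[symmetric] nn_integral_count_space_indicator)
    also have "\<dots> \<le> (\<integral>\<^sup>+z. ennreal (dp (fst z) / b) * ennreal (dq (snd z)) \<partial>count_space UNIV)"
      using nonneg by (intro nn_integral_mono)
        (auto simp: f_def indicator_def simp flip: ennreal_mult)
    also have "\<dots> = (\<integral>\<^sup>+x. ennreal (dp x / b) * ennreal b \<partial>count_space UNIV)"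
      by (simp add: nn_integral_fst_count_space[symmetric] nn_integral_cmult E2)
    also have "\<dots> \<le> (\<integral>\<^sup>+x. ennreal (dp x) \<partial>count_space UNIV)"
      using nonneg by (intro nn_integral_mono) (cases "b = 0"; simp flip: ennreal_mult)
    finally show "measure_pmf.prob (embed_pmf f) {z. fst z \<noteq> snd z} \<le> b"
      using nonneg by (simp add: E1 measure_pmf.emeasure_eq_measure)
  qed
qed

lemma maximal_coupling:
  fixes p q :: "'a pmf"
  defines "A \<equiv> {x. pmf q x < pmf p x}"
  obtains C where "map_pmf fst C = p" and "map_pmf snd C = q"
    and "measure_pmf.prob C {z. fst z \<noteq> snd z} \<le> measure p A - measure q A"
proof (rule coupling_of_overlap[where m="\<lambda>x. min (pmf p x) (pmf q x)"
      and dp="\<lambda>x. pmf p x - min (pmf p x) (pmf q x)"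
      and dq="\<lambda>x. pmf q x - min (pmf p x) (pmf q x)"])
  show "(\<integral>\<^sup>+x. ennreal (pmf p x - min (pmf p x) (pmf q x)) \<partial>count_space UNIV)
      = ennreal (measure p A - measure q A)"
    unfolding A_def nn_integral_pmf_excess(1)[symmetric]
    by (intro nn_integral_cong) (auto simp: min_def ennreal_neg)
  show "(\<integral>\<^sup>+x. ennreal (pmf q x - min (pmf p x) (pmf q x)) \<partial>count_space UNIV)
      = ennreal (measure p A - measure q A)"
    unfolding A_def nn_integral_pmf_excess(2)[symmetric]
    by (intro nn_integral_cong) (auto simp: min_def ennreal_neg)
qed (use nn_integral_pmf_excess(3)[of q p] in \<open>auto simp: A_def\<close>)

lemma abs_measure_diff_le_dTV: "\<bar>measure_pmf.prob p A - measure_pmf.prob q A\<bar> \<le> dTV p q"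
  unfolding dTV_def
proof (rule cSUP_upper)
  have "\<bar>measure_pmf.prob p B - measure_pmf.prob q B\<bar> \<le> 1" for B
    using measure_pmf.prob_le_1[of p B] measure_pmf.prob_le_1[of q B]
      measure_nonneg[of "measure_pmf p" B] measure_nonneg[of "measure_pmf q" B]
        by (simp only: abs_le_iff) linarith
  then show "bdd_above (range (\<lambda>A. \<bar>measure_pmf.prob p A - measure_pmf.prob q A\<bar>))"
    by (intro bdd_aboveI) auto
qed simp

lemma dTV_coupling:
  fixes p q :: "nat pmf"
  obtains C where "map_pmf fst C = p" and "map_pmf snd C = q"
    and "measure_pmf.prob C {z. fst z \<noteq> snd z} \<le> dTV p q"
proof -
  obtain C where "map_pmf fst C = p" "map_pmf snd C = q"
    "measure_pmf.prob C {z. fst z \<noteq> snd z}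
        \<le> measure p {x. pmf q x < pmf p x} - measure q {x. pmf q x < pmf p x}"
    by (rule maximal_coupling)
  then show ?thesis
    using abs_measure_diff_le_dTV[of p "{x. pmf q x < pmf p x}" q] by (intro that) auto
qed

lemma measure_map_prod_neq_le:
  "measure_pmf.prob (map_pmf (map_prod f f) C) {z. fst z \<noteq> snd z}
      \<le> measure_pmf.prob C {z. fst z \<noteq> snd z}"
  by (auto intro!: measure_pmf.finite_measure_mono)

section \<open>Products of independent laws\<close>

lemma nn_integral_PiM_split_coordinate:
  fixes M :: "'i \<Rightarrow> 'a measure"
  assumes M: "\<And>i. prob_space (M i)" and f: "f \<in> borel_measurable (PiM UNIV M)"
  shows "(\<integral>\<^sup>+c. f c \<partial>PiM UNIV M) = (\<integral>\<^sup>+x. \<integral>\<^sup>+X. f (X(v := x)) \<partial>PiM (UNIV - {v}) M \<partial>M v)"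
proof -
  let ?Q = "PiM (UNIV - {v}) M"
  interpret Q: prob_space ?Q using M by (intro prob_space_PiM) auto
  have upd: "(\<lambda>(x, X). X(v := x)) \<in> measurable (M v \<Otimes>\<^sub>M ?Q) (PiM UNIV M)"
    using measurable_fun_upd[of UNIV "UNIV - {v}" v snd "M v \<Otimes>\<^sub>M ?Q" M fst]
    by (simp add: case_prod_beta')
  have D: "distr (M v \<Otimes>\<^sub>M ?Q) (PiM UNIV M) (\<lambda>(x, X). X(v := x)) = PiM UNIV M"
    using distr_pair_PiM_eq_PiM[of "UNIV - {v}" M v] M by (simp add: insert_absorb)
  have "(\<integral>\<^sup>+c. f c \<partial>PiM UNIV M) = (\<integral>\<^sup>+p. f ((\<lambda>(x, X). X(v := x)) p) \<partial>(M v \<Otimes>\<^sub>M ?Q))"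
    using nn_integral_distr[OF upd, of f] f by (simp only: D)
  also have "\<dots> = (\<integral>\<^sup>+x. \<integral>\<^sup>+X. f (X(v := x)) \<partial>?Q \<partial>M v)"
    using Q.nn_integral_fst[OF measurable_compose[OF upd f]] by (simp add: case_prod_beta')
  finally show ?thesis .
qed

lemma nn_integral_PiM_indep_coordinate:
  fixes M :: "'i \<Rightarrow> 'a measure"
  assumes M: "\<And>i. prob_space (M i)"
    and g: "g \<in> borel_measurable (PiM UNIV M)" and g_indep: "\<And>c x. g (c(v := x)) = g c"
    and h: "h \<in> borel_measurable (M v)"
  shows "(\<integral>\<^sup>+c. g c * h (c v) \<partial>PiM UNIV M) = (\<integral>\<^sup>+c. g c \<partial>PiM UNIV M) * (\<integral>\<^sup>+x. h x \<partial>M v)"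
proof -
  interpret Mv: prob_space "M v" by (rule M)
  let ?G = "\<integral>\<^sup>+X. g X \<partial>PiM (UNIV - {v}) M"
  obtain x0 where "x0 \<in> space (M v)" using Mv.not_empty by blast
  then have "(\<lambda>X. X(v := x0)) \<in> measurable (PiM (UNIV - {v}) M) (PiM UNIV M)"
    by (intro measurable_fun_upd[where J="UNIV - {v}"]) auto
  from measurable_compose[OF this g] have gQ: "g \<in> borel_measurable (PiM (UNIV - {v}) M)"
    by (simp add: g_indep)
  have hv: "(\<lambda>c. h (c v)) \<in> borel_measurable (PiM UNIV M)"
    using h by measurable
  have "(\<integral>\<^sup>+c. g c * h (c v) \<partial>PiM UNIV M) = (\<integral>\<^sup>+x. h x * ?G \<partial>M v)"
    using nn_integral_PiM_split_coordinate[OF M borel_measurable_times_ennreal[OF g hv], of v]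
    by (simp add: g_indep nn_integral_multc[OF gQ] mult.commute)
  moreover have "(\<integral>\<^sup>+c. g c \<partial>PiM UNIV M) = ?G"
    using nn_integral_PiM_split_coordinate[OF M g, of v] by (simp add: g_indep Mv.emeasure_space_1)
  ultimately show ?thesis using h by (simp add: nn_integral_multc mult.commute)
qed

lemma nn_integral_count_space_swap:
  fixes f :: "'v::countable \<Rightarrow> 'x \<Rightarrow> ennreal"
  assumes "sigma_finite_measure M" and "\<And>v. f v \<in> borel_measurable M"
  shows "(\<integral>\<^sup>+x. \<integral>\<^sup>+v. f v x \<partial>count_space UNIV \<partial>M) = (\<integral>\<^sup>+v. \<integral>\<^sup>+x. f v x \<partial>M \<partial>count_space UNIV)"
proof -
  interpret pair_sigma_finite "count_space (UNIV :: 'v set)" M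
    using assms(1) by (intro pair_sigma_finite.intro sigma_finite_measure_count_space)
  have "case_prod f \<in> borel_measurable (count_space UNIV \<Otimes>\<^sub>M M)"
    by (rule measurable_pair_measure_countable1) (auto intro: assms(2))
  then show ?thesis by (rule Fubini')
qed

lemma borel_measurable_nn_integral_count_space:
  fixes f :: "'v::countable \<Rightarrow> 'x \<Rightarrow> ennreal"
  assumes "\<And>v. f v \<in> borel_measurable M"
  shows "(\<lambda>x. \<integral>\<^sup>+v. f v x \<partial>count_space UNIV) \<in> borel_measurable M"
proof -
  interpret C: sigma_finite_measure "count_space (UNIV :: 'v set)"
    by (rule sigma_finite_measure_count_space)
  have "(\<lambda>(v, x). f v x) \<in> borel_measurable (count_space UNIV \<Otimes>\<^sub>M M)"
    by (rule measurable_pair_measure_countable1) (auto intro: assms)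
  then have "(\<lambda>(x, v). f v x) \<in> borel_measurable (M \<Otimes>\<^sub>M count_space UNIV)"
    by (subst measurable_pair_swap_iff) simp
  from C.borel_measurable_nn_integral_fst[OF this] show ?thesis by simp
qed

abbreviation PiM_pmf :: "('i \<Rightarrow> 'a pmf) \<Rightarrow> ('i \<Rightarrow> 'a) measure" where
  "PiM_pmf P \<equiv> PiM UNIV (\<lambda>i. measure_pmf (P i))"

lemma prob_space_PiM_pmf: "prob_space (PiM_pmf P)"
  by (intro prob_space_PiM) (simp add: measure_pmf.prob_space_axioms)

lemma measurable_map_PiM_pmf:
  "(\<lambda>c i. g (c i)) \<in> measurable (PiM_pmf P) (PiM_pmf (\<lambda>i. map_pmf g (P i)))"
  by (rule measurable_PiM_single')
    (auto simp: space_PiM intro!: measurable_compose[OF measurable_component_singleton])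

lemma distr_PiM_pmf_map:
  "distr (PiM_pmf P) (PiM_pmf (\<lambda>i. map_pmf g (P i)))
      (\<lambda>c i. g (c i)) = PiM_pmf (\<lambda>i. map_pmf g (P i))"
    (is "distr ?P ?Q ?g = ?Q")
proof (rule measure_eqI_PiM_infinite[symmetric, OF refl])
  interpret Q: prob_space ?Q by (rule prob_space_PiM_pmf)
  show "finite_measure ?Q" by unfold_locales
  fix A J assume J: "finite J" and A: "\<And>i. i \<in> J \<Longrightarrow> A i \<in> sets (map_pmf g (P i))"
  have "?Q (prod_emb UNIV (\<lambda>i. map_pmf g (P i)) J (Pi\<^sub>E J A)) = (\<Prod>j\<in>J. emeasure (P j) (g -` A j))"
    using J by (subst emeasure_PiM_emb) (auto simp: measure_pmf.prob_space_axioms)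
  also have "\<dots> = ?P (prod_emb UNIV (\<lambda>i. P i) J (Pi\<^sub>E J (\<lambda>j. g -` A j)))"
    using J by (subst emeasure_PiM_emb) (auto simp: measure_pmf.prob_space_axioms)
  also have "prod_emb UNIV (\<lambda>i. P i) J (Pi\<^sub>E J (\<lambda>j. g -` A j))
      = ?g -` prod_emb UNIV (\<lambda>i. map_pmf g (P i)) J (Pi\<^sub>E J A) \<inter> space ?P"
    by (auto simp: prod_emb_def space_PiM PiE_iff)
  finally show "?Q (prod_emb UNIV (\<lambda>i. map_pmf g (P i)) J (Pi\<^sub>E J A))
      = distr ?P ?Q ?g (prod_emb UNIV (\<lambda>i. map_pmf g (P i)) J (Pi\<^sub>E J A))"
    using J A by (simp add: emeasure_distr measurable_map_PiM_pmf sets_PiM_I)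
qed simp

definition finitely_determined :: "(('i \<Rightarrow> 'a) \<Rightarrow> 'b) \<Rightarrow> bool" where
  "finitely_determined f \<longleftrightarrow> (\<forall>c. \<exists>F. finite F \<and> (\<forall>c'. (\<forall>i\<in>F. c' i = c i) \<longrightarrow> f c' = f c))"

lemma finitely_determined_comp: "finitely_determined f \<Longrightarrow> finitely_determined (\<lambda>c. g (f c))"
  unfolding finitely_determined_def by metis

lemma finitely_determined_map:
  assumes "finitely_determined f"
  shows "finitely_determined (\<lambda>c. f (\<lambda>i. g (c i)))"
  unfolding finitely_determined_def
proof
  fix c
  obtain F where "finite F" and F: "\<forall>c'. (\<forall>i\<in>F. c' i = g (c i)) \<longrightarrow> f c' = f (\<lambda>i. g (c i))"
    using assms[unfolded finitely_determined_def, rule_format, of "\<lambda>i. g (c i)"] by blast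
  have agree: "f (\<lambda>i. g (c' i)) = f (\<lambda>i. g (c i))" if "\<forall>i\<in>F. c' i = c i" for c'
    using that by (intro F[rule_format]) simp
  show "\<exists>F. finite F \<and> (\<forall>c'. (\<forall>i\<in>F. c' i = c i) \<longrightarrow> f (\<lambda>i. g (c' i)) = f (\<lambda>i. g (c i)))"
    by (intro exI[of _ F] conjI \<open>finite F\<close> allI impI agree)
qed

lemma space_PiM_UNIV_discrete:
  assumes "\<And>i. sets (M i) = UNIV"
  shows "space (PiM UNIV M) = UNIV"
proof -
  have "space (M i) = UNIV" for i
    using sets.sets_into_space[of UNIV "M i"] assms[of i] by auto
  then show ?thesis by (simp add: space_PiM)
qed

lemma cylinder_in_sets_PiM:
  assumes "\<And>i. sets (M i) = UNIV"
  shows "{c. \<forall>(i, a)\<in>set xs. c i = a} \<in> sets (PiM UNIV M)"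
proof (induction xs)
  case Nil
  then show ?case using sets.top[of "PiM UNIV M"] by (simp add: space_PiM_UNIV_discrete[OF assms])
next
  case (Cons p xs)
  obtain i a where p: "p = (i, a)" by (cases p)
  have "{c. \<forall>(i, a)\<in>set (p # xs). c i = a} =
        {c \<in> space (PiM UNIV M). c i \<in> {a}} \<inter> {c. \<forall>(i, a)\<in>set xs. c i = a}"
    using p by (auto simp: space_PiM_UNIV_discrete[OF assms])
  moreover have "{c \<in> space (PiM UNIV M). c i \<in> {a}} \<in> sets (PiM UNIV M)"
    by (rule sets_Collect_single) (auto simp: assms)
  ultimately show ?case using Cons by auto
qed

lemma measurable_finitely_determined:
  fixes f :: "('i::countable \<Rightarrow> 'a::countable) \<Rightarrow> 'b"
  assumes sets: "\<And>i. sets (M i) = UNIV" and f: "finitely_determined f" and "\<And>c. f c \<in> space N"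
  shows "f \<in> measurable (PiM UNIV M) N"
proof (rule measurableI)
  fix B
  define cyl where "cyl xs = {c. \<forall>(i, a)\<in>set xs. c i = a}" for xs :: "('i \<times> 'a) list"
  have eq: "f -` B = (\<Union>xs\<in>{xs. cyl xs \<subseteq> f -` B}. cyl xs)"
  proof
    show "f -` B \<subseteq> (\<Union>xs\<in>{xs. cyl xs \<subseteq> f -` B}. cyl xs)"
    proof
      fix c assume c: "c \<in> f -` B"
      obtain F where "finite F" and F: "\<And>c'. \<forall>i\<in>F. c' i = c i \<Longrightarrow> f c' = f c"
        using f unfolding finitely_determined_def by blast
      obtain ys where "set ys = F" using finite_list[OF \<open>finite F\<close>] by blast
      then have cyl: "cyl (map (\<lambda>i. (i, c i)) ys) = {c'. \<forall>i\<in>F. c' i = c i}"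
        unfolding cyl_def by auto
      have "cyl (map (\<lambda>i. (i, c i)) ys) \<subseteq> f -` B"
      proof
        fix c' assume "c' \<in> cyl (map (\<lambda>i. (i, c i)) ys)"
        then have "f c' = f c" unfolding cyl by (intro F) simp
        then show "c' \<in> f -` B" using c by simp
      qed
      moreover have "c \<in> cyl (map (\<lambda>i. (i, c i)) ys)" unfolding cyl by simp
      ultimately show "c \<in> (\<Union>xs\<in>{xs. cyl xs \<subseteq> f -` B}. cyl xs)" by blast
    qed
  qed blast
  have "cyl xs \<in> sets (PiM UNIV M)" for xs
    unfolding cyl_def by (rule cylinder_in_sets_PiM[OF sets])
  then have "(\<Union>xs\<in>{xs. cyl xs \<subseteq> f -` B}. cyl xs) \<in> sets (PiM UNIV M)"
    by (rule sets.countable_UN''[OF countableI_type])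
  then show "f -` B \<inter> space (PiM UNIV M) \<in> sets (PiM UNIV M)"
    by (simp only: eq[symmetric] space_PiM_UNIV_discrete[OF sets] Int_UNIV_right)
qed (rule assms(3))

section \<open>Explorations of Ulam--Harris trees\<close>

lemma tree_verts_snoc_iff: "v @ [i] \<in> tree_verts c \<longleftrightarrow> v \<in> tree_verts c \<and> i < c v"
proof
  assume "v @ [i] \<in> tree_verts c"
  then show "v \<in> tree_verts c \<and> i < c v"
    by (cases rule: tree_verts.cases) auto
qed (auto intro: tree_verts.child)

lemma tree_verts_butlast_iff:
  "w \<noteq> [] \<Longrightarrow> w \<in> tree_verts c \<longleftrightarrow> butlast w \<in> tree_verts c \<and> last w < c (butlast w)"
  by (metis append_butlast_last_id tree_verts_snoc_iff)

lemma tree_verts_cong: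
  assumes closed: "\<forall>u\<in>V. butlast u \<in> V" and eq: "\<forall>u\<in>V. c1 u = c2 u" and "u \<in> V"
  shows "u \<in> tree_verts c1 \<longleftrightarrow> u \<in> tree_verts c2"
  using \<open>u \<in> V\<close>
proof (induction u rule: rev_induct)
  case Nil
  then show ?case by (auto intro: tree_verts.root)
next
  case (snoc i v)
  then have "v \<in> V" using closed by (metis butlast_snoc)
  then show ?case using snoc eq by (simp add: tree_verts_snoc_iff)
qed

lemma disclosed_cong:
  assumes closed: "\<forall>u\<in>V. butlast u \<in> V" and eq: "\<forall>u\<in>V. c1 u = c2 u"
  shows "disclosed c1 V = disclosed c2 V"
proof -
  have "w \<in> tree_verts c1 \<longleftrightarrow> w \<in> tree_verts c2" if "w \<noteq> []" "butlast w \<in> V" for w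
    using that tree_verts_cong[OF closed eq] eq by (simp add: tree_verts_butlast_iff)
  then show ?thesis using closed unfolding disclosed_def by auto
qed

abbreviation tree_upto :: "(nat list \<Rightarrow> nat) \<Rightarrow> nat \<Rightarrow> nat list set" where
  "tree_upto c n \<equiv> {u \<in> tree_verts c. length u \<le> n}"

lemma finite_children: "finite V \<Longrightarrow> finite {w \<in> tree_verts c. w \<noteq> [] \<and> butlast w \<in> V}"
proof -
  assume "finite V"
  have "{w \<in> tree_verts c. w \<noteq> [] \<and> butlast w \<in> V} \<subseteq> (\<lambda>(u, i). u @ [i]) ` (SIGMA u:V. {..<c u})"
  proof
    fix w assume "w \<in> {w \<in> tree_verts c. w \<noteq> [] \<and> butlast w \<in> V}"
    then have "w = butlast w @ [last w]" "butlast w \<in> V" "last w < c (butlast w)"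
      by (auto simp: tree_verts_butlast_iff)
    then show "w \<in> (\<lambda>(u, i). u @ [i]) ` (SIGMA u:V. {..<c u})"
      by (intro image_eqI[of _ _ "(butlast w, last w)"]) auto
  qed
  moreover have "finite ((\<lambda>(u, i). u @ [i]) ` (SIGMA u:V. {..<c u}))" using \<open>finite V\<close> by auto
  ultimately show ?thesis by (rule finite_subset)
qed

lemma finite_tree_upto: "finite (tree_upto c n)"
proof (induction n)
  case (Suc n)
  have "tree_upto c (Suc n) \<subseteq> insert [] {w \<in> tree_verts c. w \<noteq> [] \<and> butlast w \<in> tree_upto c n}"
    by (auto simp: tree_verts_butlast_iff)
  then show ?case using finite_children[OF Suc] finite_subset by blast
qed simp

lemma finite_gedges_disclosed: "finite V \<Longrightarrow> finite (gedges (disclosed c V))"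
proof -
  assume "finite V"
  have "gedges (disclosed c V) \<subseteq> V \<union> {w \<in> tree_verts c. w \<noteq> [] \<and> butlast w \<in> V}"
    by (auto simp: disclosed_def)
  then show ?thesis using \<open>finite V\<close> finite_children finite_subset by blast
qed

type_synonym estate = "nat list set \<times> nat list list \<times> bool"

definition valid_state :: "(nat list \<Rightarrow> nat) \<Rightarrow> nat \<Rightarrow> estate \<Rightarrow> bool" where
  "valid_state c k s \<longleftrightarrow> finite (fst s) \<and> [] \<in> fst s \<and> (\<forall>u\<in>fst s. butlast u \<in> fst s)
     \<and> fst s \<subseteq> tree_verts c \<and> (\<forall>u\<in>fst s. length u \<le> k)
     \<and> set (fst (snd s)) \<subseteq> gedges (disclosed c (fst s))"

lemma valid_state_finite_expl: "valid_state c k (V, es, b) \<Longrightarrow> finite_expl (disclosed c V, es)"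
  using finite_gedges_disclosed[of V c]
  unfolding valid_state_def finite_expl_def by (auto simp: disclosed_def card_insert_if)

lemma expl_step_mono: "s' \<in> set_pmf (expl_step K c s) \<Longrightarrow> fst s \<subseteq> fst s'"
  by (cases s) (auto simp: expl_step_def split: if_splits option.splits)

lemma expl_step_cong:
  "disclosed c (fst s) = disclosed c' (fst s) \<Longrightarrow> expl_step K c s = expl_step K c' s"
  by (cases s) (simp add: expl_step_def)

text \<open>The parent butlast w of an explored edge w is disclosed already, so a step discloses at
  most the one new vertex w.\<close>

lemma expl_step_valid_state:
  assumes K: "exploration_rule K" and valid: "valid_state c k s"
    and s': "s' \<in> set_pmf (expl_step K c s)"
  shows "valid_state c (Suc k) s' \<and> (\<exists>w. fst s' \<subseteq> insert w (fst s))"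
proof -
  obtain V es stop where s: "s = (V, es, stop)" by (cases s)
  consider "fst s' = V" "fst (snd s') = es" | w where "Some w \<in> set_pmf (K (disclosed c V, es))"
      "s' = (insert (butlast w) (insert w V), es @ [w], False)"
    using s' s by (auto simp: expl_step_def split: if_splits option.splits)
  then show ?thesis
  proof cases
    case 1
    then show ?thesis using valid s by (auto simp: valid_state_def)
  next
    case (2 w)
    have "set_pmf (K (disclosed c V, es)) \<subseteq> insert None (Some ` gedges (disclosed c V))"
      using K valid_state_finite_expl[of c k V es stop] valid s
      unfolding exploration_rule_def by auto
    then have "w \<in> gedges (disclosed c V)" using 2 by auto
    moreover have "gedges (disclosed c V) \<subseteq> gedges (disclosed c (insert w V))"
      by (auto simp: disclosed_def)
    ultimately show ?thesis using valid s 2 by (auto simp: valid_state_def disclosed_def)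
  qed
qed

lemma valid_state_expl_state:
  assumes K: "exploration_rule K"
  shows "s \<in> set_pmf (expl_state K c k) \<Longrightarrow> valid_state c k s"
proof (induction k arbitrary: s)
  case 0
  then show ?case by (auto simp: valid_state_def disclosed_def intro: tree_verts.root)
next
  case (Suc k)
  then obtain s0 where "s0 \<in> set_pmf (expl_state K c k)" "s \<in> set_pmf (expl_step K c s0)"
    by auto
  then show ?case using Suc.IH expl_step_valid_state[OF K] by blast
qed

lemma valid_state_disclosed_cong:
  "valid_state c k s \<Longrightarrow> \<forall>u\<in>fst s. c' u = c u \<Longrightarrow> disclosed c' (fst s) = disclosed c (fst s)"
  by (intro disclosed_cong) (auto simp: valid_state_def)

lemma disclosed_cong_expl_state:
  assumes K: "exploration_rule K" and s: "s \<in> set_pmf (expl_state K c k)"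
    and eq: "\<forall>u\<in>tree_upto c n. c' u = c u" and "k \<le> n"
  shows "disclosed c' (fst s) = disclosed c (fst s)"
proof -
  have "valid_state c k s" using valid_state_expl_state[OF K s] .
  moreover from this have "\<forall>u\<in>fst s. c' u = c u" using eq \<open>k \<le> n\<close> by (force simp: valid_state_def)
  ultimately show ?thesis by (rule valid_state_disclosed_cong)
qed

lemma expl_state_local:
  assumes K: "exploration_rule K" and eq: "\<forall>u\<in>tree_upto c n. c' u = c u"
  shows "k \<le> Suc n \<Longrightarrow> expl_state K c' k = expl_state K c k"
proof (induction k)
  case (Suc k)
  have "expl_state K c' (Suc k) = bind_pmf (expl_state K c k) (expl_step K c')"
    using Suc by simp
  also have "\<dots> = bind_pmf (expl_state K c k) (expl_step K c)"
    using disclosed_cong_expl_state[OF K _ eq] Suc.prems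
    by (intro bind_pmf_cong refl expl_step_cong) simp
  finally show ?case by simp
qed simp

definition expl_of_state :: "(nat list \<Rightarrow> nat) \<Rightarrow> estate \<Rightarrow> expl" where
  "expl_of_state c s = (disclosed c (fst s), fst (snd s))"

lemma exploration_eq_map_expl_state:
  "exploration K c n = map_pmf (expl_of_state c) (expl_state K c n)"
  unfolding exploration_def expl_of_state_def by (rule map_pmf_cong) auto

lemma exploration_local:
  assumes K: "exploration_rule K" and eq: "\<forall>u\<in>tree_upto c n. c' u = c u"
  shows "exploration K c' n = exploration K c n"
  unfolding exploration_eq_map_expl_state expl_state_local[OF K eq le_SucI[OF order_refl]]
  using disclosed_cong_expl_state[OF K _ eq order_refl]
  by (intro map_pmf_cong) (simp_all add: expl_of_state_def)

lemma finitely_determined_exploration: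
  assumes K: "exploration_rule K"
  shows "finitely_determined (\<lambda>c. exploration K c n)"
  unfolding finitely_determined_def
proof
  fix c :: "nat list \<Rightarrow> nat"
  show "\<exists>F. finite F \<and> (\<forall>c'. (\<forall>i\<in>F. c' i = c i) \<longrightarrow> exploration K c' n = exploration K c n)"
    by (intro exI[of _ "tree_upto c n"] conjI finite_tree_upto allI impI exploration_local[OF K])
qed

section \<open>Joint explorations\<close>

definition joint_step ::
  "(expl \<Rightarrow> nat list option pmf) \<Rightarrow> (nat list \<Rightarrow> nat) \<Rightarrow> (nat list \<Rightarrow> nat) \<Rightarrow>
     estate \<times> estate \<Rightarrow> (estate \<times> estate) pmf" where
  "joint_step K c1 c2 ss =
     (if fst ss = snd ss \<and> disclosed c1 (fst (fst ss)) = disclosed c2 (fst (snd ss))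
      then map_pmf (\<lambda>s. (s, s)) (expl_step K c1 (fst ss))
      else pair_pmf (expl_step K c1 (fst ss)) (expl_step K c2 (snd ss)))"

fun joint_state ::
  "(expl \<Rightarrow> nat list option pmf) \<Rightarrow> (nat list \<Rightarrow> nat) \<Rightarrow> (nat list \<Rightarrow> nat) \<Rightarrow> nat \<Rightarrow>
     (estate \<times> estate) pmf" where
  "joint_state K c1 c2 0 = return_pmf (({[]}, [], False), ({[]}, [], False))"
| "joint_state K c1 c2 (Suc n) = bind_pmf (joint_state K c1 c2 n) (joint_step K c1 c2)"

lemma map_fst_joint_step: "map_pmf fst (joint_step K c1 c2 ss) = expl_step K c1 (fst ss)"
  by (auto simp: joint_step_def pmf.map_comp o_def map_fst_pair_pmf)

lemma map_snd_joint_step: "map_pmf snd (joint_step K c1 c2 ss) = expl_step K c2 (snd ss)"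
proof (cases "fst ss = snd ss \<and> disclosed c1 (fst (fst ss)) = disclosed c2 (fst (snd ss))")
  case True
  then have "disclosed c1 (fst (fst ss)) = disclosed c2 (fst (fst ss))" by auto
  then have "expl_step K c1 (fst ss) = expl_step K c2 (fst ss)" by (rule expl_step_cong)
  then show ?thesis unfolding joint_step_def if_P[OF True] using True
    by (simp add: pmf.map_comp o_def)
next
  case False
  then show ?thesis unfolding joint_step_def if_not_P[OF False] by (simp add: map_snd_pair_pmf)
qed

lemma map_fst_joint_state: "map_pmf fst (joint_state K c1 c2 n) = expl_state K c1 n"
  by (induction n) (simp_all add: map_bind_pmf map_fst_joint_step bind_map_pmf[symmetric])

lemma map_snd_joint_state: "map_pmf snd (joint_state K c1 c2 n) = expl_state K c2 n"
  by (induction n) (simp_all add: map_bind_pmf map_snd_joint_step bind_map_pmf[symmetric])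

lemma fst_in_set_expl_state:
  "ss \<in> set_pmf (joint_state K c1 c2 n) \<Longrightarrow> fst ss \<in> set_pmf (expl_state K c1 n)"
  using map_fst_joint_state[of K c1 c2 n] by (metis pmf.set_map imageI)

lemma snd_in_set_expl_state:
  "ss \<in> set_pmf (joint_state K c1 c2 n) \<Longrightarrow> snd ss \<in> set_pmf (expl_state K c2 n)"
  using map_snd_joint_state[of K c1 c2 n] by (metis pmf.set_map imageI)

lemma joint_state_diverged:
  assumes K: "exploration_rule K"
  shows "ss \<in> set_pmf (joint_state K c1 c2 n) \<Longrightarrow> fst ss \<noteq> snd ss \<Longrightarrow> \<not> fst (fst ss) \<subseteq> {u. c1 u = c2 u}"
proof (induction n arbitrary: ss)
  case (Suc n)
  then obtain tt where tt: "tt \<in> set_pmf (joint_state K c1 c2 n)"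
    and ss: "ss \<in> set_pmf (joint_step K c1 c2 tt)"
    by auto
  have "\<not> fst (fst tt) \<subseteq> {u. c1 u = c2 u}"
  proof
    assume agree: "fst (fst tt) \<subseteq> {u. c1 u = c2 u}"
    then have "fst tt = snd tt" using Suc.IH[OF tt] by blast
    moreover have "disclosed c2 (fst (fst tt)) = disclosed c1 (fst (fst tt))"
      using agree valid_state_expl_state[OF K fst_in_set_expl_state[OF tt]]
      by (intro valid_state_disclosed_cong) auto
    ultimately have "fst ss = snd ss" using ss by (auto simp: joint_step_def)
    then show False using Suc.prems by simp
  qed
  moreover have "fst ss \<in> set_pmf (expl_step K c1 (fst tt))"
    using ss map_fst_joint_step[of K c1 c2 tt] by (metis pmf.set_map imageI)
  ultimately show ?case using expl_step_mono by blast
qed simp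

definition joint_exploration ::
  "(expl \<Rightarrow> nat list option pmf) \<Rightarrow> (nat list \<Rightarrow> nat) \<Rightarrow> (nat list \<Rightarrow> nat) \<Rightarrow> nat \<Rightarrow>
     (expl \<times> expl) pmf" where
  "joint_exploration K c1 c2 n =
     map_pmf (\<lambda>ss. (expl_of_state c1 (fst ss), expl_of_state c2 (snd ss))) (joint_state K c1 c2 n)"

lemma map_fst_joint_exploration: "map_pmf fst (joint_exploration K c1 c2 n) = exploration K c1 n"
  by (simp add: joint_exploration_def pmf.map_comp o_def exploration_eq_map_expl_state
      flip: map_fst_joint_state[of K c1 c2 n])

lemma map_snd_joint_exploration: "map_pmf snd (joint_exploration K c1 c2 n) = exploration K c2 n"
  by (simp add: joint_exploration_def pmf.map_comp o_def exploration_eq_map_expl_state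
      flip: map_snd_joint_state[of K c1 c2 n])

lemma expl_agree_refl: "expl_agree X X"
  unfolding expl_agree_def expl_iso_def
  by (intro exI[of _ id]) (simp add: option.map_id)

lemma emeasure_joint_exploration_disagree:
  assumes K: "exploration_rule K"
  shows "emeasure (joint_exploration K c1 c2 n) {p. \<not> expl_agree (fst p) (snd p)}
         \<le> emeasure (expl_state K c1 n) {s. \<not> fst s \<subseteq> {u. c1 u = c2 u}}"
proof -
  let ?f = "\<lambda>ss. (expl_of_state c1 (fst ss), expl_of_state c2 (snd ss))"
  have "?f -` {p. \<not> expl_agree (fst p) (snd p)} \<inter> set_pmf (joint_state K c1 c2 n)
      \<subseteq> {ss. \<not> fst (fst ss) \<subseteq> {u. c1 u = c2 u}}"
  proof
    fix ss assume "ss \<in> ?f -` {p. \<not> expl_agree (fst p) (snd p)} \<inter> set_pmf (joint_state K c1 c2 n)"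
    then have bad: "\<not> expl_agree (expl_of_state c1 (fst ss)) (expl_of_state c2 (snd ss))"
      and ss: "ss \<in> set_pmf (joint_state K c1 c2 n)" by auto
    have "\<not> fst (fst ss) \<subseteq> {u. c1 u = c2 u}"
    proof
      assume agree: "fst (fst ss) \<subseteq> {u. c1 u = c2 u}"
      then have "fst ss = snd ss" using joint_state_diverged[OF K ss] by blast
      moreover have "disclosed c2 (fst (fst ss)) = disclosed c1 (fst (fst ss))"
        using agree valid_state_expl_state[OF K fst_in_set_expl_state[OF ss]]
        by (intro valid_state_disclosed_cong) auto
      ultimately show False using bad by (simp add: expl_of_state_def expl_agree_refl)
    qed
    then show "ss \<in> {ss. \<not> fst (fst ss) \<subseteq> {u. c1 u = c2 u}}" by simp
  qed
  then have "emeasure (joint_state K c1 c2 n)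
      (?f -` {p. \<not> expl_agree (fst p) (snd p)} \<inter> set_pmf (joint_state K c1 c2 n))
      \<le> emeasure (joint_state K c1 c2 n) {ss. \<not> fst (fst ss) \<subseteq> {u. c1 u = c2 u}}"
    by (auto intro: emeasure_mono)
  then show ?thesis
    by (simp add: joint_exploration_def emeasure_Int_set_pmf
        flip: map_fst_joint_state[of K c1 c2 n])
qed

lemma joint_state_local:
  assumes K: "exploration_rule K"
    and eq1: "\<forall>u\<in>tree_upto c1 n. c1' u = c1 u" and eq2: "\<forall>u\<in>tree_upto c2 n. c2' u = c2 u"
  shows "k \<le> Suc n \<Longrightarrow> joint_state K c1' c2' k = joint_state K c1 c2 k"
proof (induction k)
  case (Suc k)
  have "joint_state K c1' c2' (Suc k) = bind_pmf (joint_state K c1 c2 k) (joint_step K c1' c2')"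
    using Suc by simp
  also have "\<dots> = bind_pmf (joint_state K c1 c2 k) (joint_step K c1 c2)"
  proof (rule bind_pmf_cong[OF refl])
    fix ss assume ss: "ss \<in> set_pmf (joint_state K c1 c2 k)"
    have disc: "disclosed c1' (fst (fst ss)) = disclosed c1 (fst (fst ss))"
      "disclosed c2' (fst (snd ss)) = disclosed c2 (fst (snd ss))"
      using disclosed_cong_expl_state[OF K fst_in_set_expl_state[OF ss] eq1]
        disclosed_cong_expl_state[OF K snd_in_set_expl_state[OF ss] eq2] Suc.prems by simp_all
    then have "expl_step K c1' (fst ss) = expl_step K c1 (fst ss)"
      "expl_step K c2' (snd ss) = expl_step K c2 (snd ss)"
      by (auto intro: expl_step_cong)
    then show "joint_step K c1' c2' ss = joint_step K c1 c2 ss"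
      by (simp only: joint_step_def disc)
  qed
  finally show ?case by simp
qed simp

lemma finitely_determined_joint_exploration:
  assumes K: "exploration_rule K"
  shows "finitely_determined (\<lambda>c. joint_exploration K (\<lambda>u. fst (c u)) (\<lambda>u. snd (c u)) n)"
  unfolding finitely_determined_def
proof
  fix c :: "nat list \<Rightarrow> nat \<times> nat"
  let ?F = "tree_upto (\<lambda>u. fst (c u)) n \<union> tree_upto (\<lambda>u. snd (c u)) n"
  have local: "joint_exploration K (\<lambda>u. fst (c' u)) (\<lambda>u. snd (c' u)) n
      = joint_exploration K (\<lambda>u. fst (c u)) (\<lambda>u. snd (c u)) n" if "\<forall>i\<in>?F. c' i = c i" for c'
  proof -
    have eq1: "\<forall>u\<in>tree_upto (\<lambda>u. fst (c u)) n. fst (c' u) = fst (c u)"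
      and eq2: "\<forall>u\<in>tree_upto (\<lambda>u. snd (c u)) n. snd (c' u) = snd (c u)"
      using that by simp_all
    show ?thesis
      unfolding joint_exploration_def joint_state_local[OF K eq1 eq2 le_SucI[OF order_refl]]
      using disclosed_cong_expl_state[OF K fst_in_set_expl_state eq1 order_refl]
        disclosed_cong_expl_state[OF K snd_in_set_expl_state eq2 order_refl]
      by (intro map_pmf_cong) (simp_all add: expl_of_state_def)
  qed
  show "\<exists>F. finite F \<and> (\<forall>c'. (\<forall>i\<in>F. c' i = c i) \<longrightarrow>
      joint_exploration K (\<lambda>u. fst (c' u)) (\<lambda>u. snd (c' u)) n
      = joint_exploration K (\<lambda>u. fst (c u)) (\<lambda>u. snd (c u)) n)"
    by (intro exI[of _ ?F] conjI allI impI local) (simp_all add: finite_tree_upto)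
qed

section \<open>Discovery probabilities\<close>

definition discovery_prob ::
  "(expl \<Rightarrow> nat list option pmf) \<Rightarrow> (nat list \<Rightarrow> nat) \<Rightarrow> nat list \<Rightarrow> nat \<Rightarrow> ennreal" where
  "discovery_prob K c v k =
     (\<integral>\<^sup>+s. emeasure (expl_step K c s) {s'. v \<in> fst s' - fst s} \<partial>expl_state K c k)"

lemma emeasure_expl_step_not_subset:
  "emeasure (expl_step K c s) {s'. \<not> fst s' \<subseteq> A}
     \<le> indicator {s. \<not> fst s \<subseteq> A} s
       + (\<integral>\<^sup>+v. indicator (- A) v
         * emeasure (expl_step K c s) {s'. v \<in> fst s' - fst s} \<partial>count_space UNIV)"
proof -
  have pointwise: "indicator {s'. \<not> fst s' \<subseteq> A} s' \<le> indicator {s. \<not> fst s \<subseteq> A} s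
      + (\<integral>\<^sup>+v. indicator (- A) v * indicator (fst s' - fst s) v \<partial>count_space UNIV)" for s' :: estate
  proof (cases "fst s' \<subseteq> A \<or> \<not> fst s \<subseteq> A")
    case False
    then obtain u where "u \<in> fst s' - fst s" "u \<notin> A" by auto
    then have "1 \<le> (\<integral>\<^sup>+v. indicator (- A) v * indicator (fst s' - fst s) v \<partial>count_space UNIV)"
      using le_nn_integral_count_space[of "\<lambda>v. indicator (- A) v * indicator (fst s' - fst s) v" u]
      by simp
    then show ?thesis using False by simp
  qed (auto simp: indicator_def add_increasing2)
  have "emeasure (expl_step K c s) {s'. \<not> fst s' \<subseteq> A}
      \<le> (\<integral>\<^sup>+s'. indicator {s. \<not> fst s \<subseteq> A} s
           + (\<integral>\<^sup>+v. indicator (- A) v * indicator (fst s' - fst s) v \<partial>count_space UNIV)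
         \<partial>expl_step K c s)"
    by (simp add: nn_integral_mono pointwise flip: nn_integral_indicator)
  also have "\<dots> = indicator {s. \<not> fst s \<subseteq> A} s
      + (\<integral>\<^sup>+s'. \<integral>\<^sup>+v. indicator (- A) v
        * indicator (fst s' - fst s) v \<partial>count_space UNIV \<partial>expl_step K c s)"
    by (simp add: nn_integral_add measure_pmf.emeasure_space_1)
  also have "(\<integral>\<^sup>+s'. \<integral>\<^sup>+v. indicator (- A) v
      * indicator (fst s' - fst s) v \<partial>count_space UNIV \<partial>expl_step K c s)
      = (\<integral>\<^sup>+v. indicator (- A) v
        * emeasure (expl_step K c s) {s'. v \<in> fst s' - fst s} \<partial>count_space UNIV)"
    by (subst nn_integral_count_space_swap) (auto intro!: nn_integral_cong simp: nn_integral_cmult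
        measure_pmf.sigma_finite_measure_axioms indicator_def simp flip: nn_integral_indicator)
  finally show ?thesis .
qed

lemma emeasure_expl_state_not_subset:
  "emeasure (expl_state K c n) {s. \<not> fst s \<subseteq> A}
     \<le> indicator (- A) []
       + (\<Sum>k<n. \<integral>\<^sup>+v. indicator (- A) v * discovery_prob K c v k \<partial>count_space UNIV)"
proof (induction n)
  case 0
  then show ?case by (simp add: indicator_def)
next
  case (Suc n)
  let ?step = "\<lambda>s. \<integral>\<^sup>+v. indicator (- A) v
      * emeasure (expl_step K c s) {s'. v \<in> fst s' - fst s} \<partial>count_space UNIV"
  have "emeasure (expl_state K c (Suc n)) {s. \<not> fst s \<subseteq> A}
      = (\<integral>\<^sup>+s. emeasure (expl_step K c s) {s. \<not> fst s \<subseteq> A} \<partial>expl_state K c n)"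
    by simp
  also have "\<dots> \<le> (\<integral>\<^sup>+s. indicator {s. \<not> fst s \<subseteq> A} s + ?step s \<partial>expl_state K c n)"
    by (intro nn_integral_mono emeasure_expl_step_not_subset)
  also have "\<dots> = emeasure (expl_state K c n) {s. \<not> fst s \<subseteq> A} + (\<integral>\<^sup>+s. ?step s \<partial>expl_state K c n)"
    by (simp add: nn_integral_add)
  also have "(\<integral>\<^sup>+s. ?step s \<partial>expl_state K c n)
      = (\<integral>\<^sup>+v. indicator (- A) v * discovery_prob K c v n \<partial>count_space UNIV)"
    by (subst nn_integral_count_space_swap)
       (simp_all add: nn_integral_cmult measure_pmf.sigma_finite_measure_axioms discovery_prob_def)
  finally show ?case using Suc.IH by (simp add: add.assoc add_right_mono order_trans)
qed

lemma nn_integral_discovery_prob_le_1: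
  assumes K: "exploration_rule K"
  shows "(\<integral>\<^sup>+v. discovery_prob K c v k \<partial>count_space UNIV) \<le> 1"
proof -
  have "(\<integral>\<^sup>+v. emeasure (expl_step K c s) {s'. v \<in> fst s' - fst s} \<partial>count_space UNIV) \<le> 1"
    if s: "s \<in> set_pmf (expl_state K c k)" for s
  proof -
    have "(\<integral>\<^sup>+v. emeasure (expl_step K c s) {s'. v \<in> fst s' - fst s} \<partial>count_space UNIV)
        = (\<integral>\<^sup>+v. \<integral>\<^sup>+s'. indicator (fst s' - fst s) v \<partial>expl_step K c s \<partial>count_space UNIV)"
      by (intro nn_integral_cong) (simp add: indicator_def flip: nn_integral_indicator)
    also have "\<dots> = (\<integral>\<^sup>+s'. emeasure (count_space UNIV) (fst s' - fst s) \<partial>expl_step K c s)"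
      by (simp add: nn_integral_count_space_swap[symmetric] measure_pmf.sigma_finite_measure_axioms)
    also have "\<dots> \<le> (\<integral>\<^sup>+s'. 1 \<partial>expl_step K c s)"
    proof (intro nn_integral_mono_AE AE_pmfI)
      fix s' assume "s' \<in> set_pmf (expl_step K c s)"
      then obtain w where "fst s' - fst s \<subseteq> {w}"
        using expl_step_valid_state[OF K valid_state_expl_state[OF K s]] by blast
      then show "emeasure (count_space UNIV) (fst s' - fst s) \<le> 1"
        using emeasure_mono[of "fst s' - fst s" "{w}" "count_space UNIV"] by simp
    qed
    finally show ?thesis by (simp add: measure_pmf.emeasure_space_1)
  qed
  then have "(\<integral>\<^sup>+s. \<integral>\<^sup>+v. emeasure (expl_step K c s) {s'. v \<in> fst s' - fst s} \<partial>count_space UNIV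
      \<partial>expl_state K c k) \<le> (\<integral>\<^sup>+s. 1 \<partial>expl_state K c k)"
    by (intro nn_integral_mono_AE AE_pmfI)
  then show ?thesis
    by (simp add: discovery_prob_def nn_integral_count_space_swap
      measure_pmf.sigma_finite_measure_axioms
        measure_pmf.emeasure_space_1)
qed

lemma discovery_prob_root:
  assumes K: "exploration_rule K"
  shows "discovery_prob K c [] k = 0"
proof -
  have "[] \<in> fst s" if "s \<in> set_pmf (expl_state K c k)" for s
    using valid_state_expl_state[OF K that] by (simp add: valid_state_def)
  then show ?thesis
    unfolding discovery_prob_def by (subst nn_integral_0_iff_AE) (auto intro: AE_pmfI)
qed

lemma expl_step_cong_unexplored:
  assumes K: "exploration_rule K" and "s \<in> set_pmf (expl_state K c k)"
    and "v \<notin> fst s" and "\<And>u. u \<noteq> v \<Longrightarrow> c' u = c u"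
  shows "expl_step K c' s = expl_step K c s"
proof -
  have "valid_state c k s" by (rule valid_state_expl_state[OF K assms(2)])
  moreover have "\<forall>u\<in>fst s. c' u = c u" using assms(3,4) by metis
  ultimately have "disclosed c' (fst s) = disclosed c (fst s)" by (rule valid_state_disclosed_cong)
  then show ?thesis by (rule expl_step_cong)
qed

lemma pmf_expl_state_cong_unexplored:
  assumes K: "exploration_rule K" and eq: "\<And>u. u \<noteq> v \<Longrightarrow> c' u = c u"
  shows "v \<notin> fst s \<Longrightarrow> pmf (expl_state K c' k) s = pmf (expl_state K c k) s"
proof (induction k arbitrary: s)
  case (Suc k)
  have "ennreal (pmf (expl_state K c' k) t * pmf (expl_step K c' t) s)
      = ennreal (pmf (expl_state K c k) t * pmf (expl_step K c t) s)" for t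
  proof (cases "v \<in> fst t")
    case True
    then have "s \<notin> set_pmf (expl_step K c' t)" "s \<notin> set_pmf (expl_step K c t)"
      using expl_step_mono Suc.prems by blast+
    then show ?thesis by (simp add: set_pmf_iff)
  next
    case False
    then show ?thesis
      using Suc.IH expl_step_cong_unexplored[OF K _ False eq]
      by (cases "t \<in> set_pmf (expl_state K c k)") (auto simp: set_pmf_iff)
  qed
  then have "ennreal (pmf (expl_state K c' (Suc k)) s) = ennreal (pmf (expl_state K c (Suc k)) s)"
    by (simp add: ennreal_pmf_bind nn_integral_measure_pmf flip: ennreal_mult)
  then show ?case by simp
qed simp

lemma discovery_prob_cong:
  assumes K: "exploration_rule K" and eq: "\<And>u. u \<noteq> v \<Longrightarrow> c' u = c u"
  shows "discovery_prob K c' v k = discovery_prob K c v k"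
proof -
  have "ennreal (pmf (expl_state K c' k) s) * emeasure (expl_step K c' s) {s'. v \<in> fst s' - fst s}
      = ennreal (pmf (expl_state K c k) s)
        * emeasure (expl_step K c s) {s'. v \<in> fst s' - fst s}" for s
  proof (cases "v \<in> fst s")
    case False
    then show ?thesis
      using pmf_expl_state_cong_unexplored[OF K eq False] expl_step_cong_unexplored[OF K _ False eq]
      by (cases "s \<in> set_pmf (expl_state K c k)") (auto simp: set_pmf_iff)
  qed simp
  then show ?thesis unfolding discovery_prob_def nn_integral_measure_pmf by simp
qed

lemma finitely_determined_discovery_prob:
  assumes K: "exploration_rule K"
  shows "finitely_determined (\<lambda>c. discovery_prob K c v k)"
  unfolding finitely_determined_def
proof
  fix c :: "nat list \<Rightarrow> nat"
  have local: "discovery_prob K c' v k = discovery_prob K c v k"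
    if eq: "\<forall>u\<in>tree_upto c k. c' u = c u" for c'
    unfolding discovery_prob_def expl_state_local[OF K eq le_SucI[OF order_refl]]
  proof (intro nn_integral_cong_AE AE_pmfI)
    fix s assume "s \<in> set_pmf (expl_state K c k)"
    then have "expl_step K c' s = expl_step K c s"
      by (intro expl_step_cong disclosed_cong_expl_state[OF K _ eq order_refl])
    then show "emeasure (expl_step K c' s) {s'. v \<in> fst s' - fst s}
        = emeasure (expl_step K c s) {s'. v \<in> fst s' - fst s}"
      by simp
  qed
  show "\<exists>F. finite F \<and> (\<forall>c'. (\<forall>i\<in>F. c' i = c i) \<longrightarrow> discovery_prob K c' v k = discovery_prob K c v k)"
    by (intro exI[of _ "tree_upto c k"] conjI allI impI local) (simp_all add: finite_tree_upto)
qed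

lemma borel_measurable_discovery_prob:
  fixes Cp :: "nat list \<Rightarrow> (nat \<times> nat) pmf"
  assumes K: "exploration_rule K"
  shows "(\<lambda>c. discovery_prob K (\<lambda>u. fst (c u)) v k) \<in> borel_measurable (PiM_pmf Cp)"
proof (rule measurable_finitely_determined)
  show "finitely_determined (\<lambda>c. discovery_prob K (\<lambda>u. fst (c u)) v k)"
    using finitely_determined_map[where f="\<lambda>c. discovery_prob K c v k" and g=fst]
      finitely_determined_discovery_prob[OF K] by blast
qed simp_all

text \<open>Whether v is disclosed in a given step does not depend on the child numbers at v, so it is
  independent of a mismatch at v; and at most one vertex is disclosed per step.\<close>

lemma nn_integral_discovery_mismatch_le:
  fixes Cp :: "nat list \<Rightarrow> (nat \<times> nat) pmf"
  assumes K: "exploration_rule K"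
    and mismatch: "\<And>v. v \<noteq> [] \<Longrightarrow> emeasure (Cp v) {z. fst z \<noteq> snd z} \<le> ennreal d"
  shows "(\<integral>\<^sup>+c. \<integral>\<^sup>+v. discovery_prob K (\<lambda>u. fst (c u)) v k * indicator {z. fst z \<noteq> snd z} (c v)
            \<partial>count_space UNIV \<partial>PiM_pmf Cp) \<le> ennreal d"
proof -
  let ?G = "\<lambda>v c. discovery_prob K (\<lambda>u. fst (c u)) v k"
  let ?h = "indicator {z :: nat \<times> nat. fst z \<noteq> snd z} :: nat \<times> nat \<Rightarrow> ennreal"
  interpret \<nu>: prob_space "PiM_pmf Cp" by (rule prob_space_PiM_pmf)
  note G = borel_measurable_discovery_prob[OF K]
  have hv: "(\<lambda>c. ?h (c v)) \<in> borel_measurable (PiM_pmf Cp)" for v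
    by measurable
  have "(\<integral>\<^sup>+c. ?G v c * ?h (c v) \<partial>PiM_pmf Cp) \<le> (\<integral>\<^sup>+c. ?G v c \<partial>PiM_pmf Cp) * ennreal d" for v
  proof (cases "v = []")
    case False
    have "(\<integral>\<^sup>+c. ?G v c * ?h (c v) \<partial>PiM_pmf Cp)
        = (\<integral>\<^sup>+c. ?G v c \<partial>PiM_pmf Cp) * emeasure (Cp v) {z. fst z \<noteq> snd z}"
      by (subst nn_integral_PiM_indep_coordinate[OF measure_pmf.prob_space_axioms G])
         (auto intro: discovery_prob_cong[OF K])
    then show ?thesis using mismatch[OF False] by (simp add: mult_left_mono)
  qed (simp add: discovery_prob_root[OF K])
  then have "(\<integral>\<^sup>+c. \<integral>\<^sup>+v. ?G v c * ?h (c v) \<partial>count_space UNIV \<partial>PiM_pmf Cp)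
      \<le> (\<integral>\<^sup>+v. (\<integral>\<^sup>+c. ?G v c \<partial>PiM_pmf Cp) * ennreal d \<partial>count_space UNIV)"
    by (subst nn_integral_count_space_swap)
       (auto intro!: nn_integral_mono borel_measurable_times_ennreal G hv simp:
         \<nu>.sigma_finite_measure_axioms)
  also have "\<dots> = (\<integral>\<^sup>+c. \<integral>\<^sup>+v. ?G v c \<partial>count_space UNIV \<partial>PiM_pmf Cp) * ennreal d"
    by (simp add: nn_integral_multc nn_integral_count_space_swap[OF _ G]
      \<nu>.sigma_finite_measure_axioms)
  also have "\<dots> \<le> (\<integral>\<^sup>+c. 1 \<partial>PiM_pmf Cp) * ennreal d"
    by (intro mult_right_mono nn_integral_mono nn_integral_discovery_prob_le_1[OF K]) simp
  finally show ?thesis by (simp add: \<nu>.emeasure_space_1)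
qed

lemma nn_integral_expl_state_mismatch_le:
  fixes Cp :: "nat list \<Rightarrow> (nat \<times> nat) pmf"
  assumes K: "exploration_rule K"
    and root: "emeasure (Cp []) {z. fst z \<noteq> snd z} \<le> ennreal d0"
    and other: "\<And>v. v \<noteq> [] \<Longrightarrow> emeasure (Cp v) {z. fst z \<noteq> snd z} \<le> ennreal d1"
  shows "(\<integral>\<^sup>+c. emeasure (expl_state K (\<lambda>u. fst (c u)) l) {s. \<not> fst s \<subseteq> {u. fst (c u) = snd (c u)}}
           \<partial>PiM_pmf Cp) \<le> ennreal d0 + of_nat l * ennreal d1"
proof -
  let ?h = "indicator {z :: nat \<times> nat. fst z \<noteq> snd z} :: nat \<times> nat \<Rightarrow> ennreal"
  let ?S = "\<lambda>k c. \<integral>\<^sup>+v. discovery_prob K (\<lambda>u. fst (c u)) v k * ?h (c v) \<partial>count_space UNIV"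
  interpret \<nu>: prob_space "PiM_pmf Cp" by (rule prob_space_PiM_pmf)
  have S: "?S k \<in> borel_measurable (PiM_pmf Cp)" for k
    by (intro borel_measurable_nn_integral_count_space borel_measurable_times_ennreal
        borel_measurable_discovery_prob[OF K]) measurable
  have "emeasure (expl_state K (\<lambda>u. fst (c u)) l) {s. \<not> fst s \<subseteq> {u. fst (c u) = snd (c u)}}
      \<le> ?h (c []) + (\<Sum>k<l. ?S k c)" for c
    using emeasure_expl_state_not_subset[of K "\<lambda>u. fst (c u)" l "{u. fst (c u) = snd (c u)}"]
    by (simp add: indicator_def mult.commute)
  then have "(\<integral>\<^sup>+c. emeasure (expl_state K (\<lambda>u. fst (c u)) l)
        {s. \<not> fst s \<subseteq> {u. fst (c u) = snd (c u)}} \<partial>PiM_pmf Cp)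
      \<le> (\<integral>\<^sup>+c. ?h (c []) + (\<Sum>k<l. ?S k c) \<partial>PiM_pmf Cp)"
    by (rule nn_integral_mono)
  also have "\<dots> = (\<integral>\<^sup>+c. ?h (c []) \<partial>PiM_pmf Cp) + (\<Sum>k<l. \<integral>\<^sup>+c. ?S k c \<partial>PiM_pmf Cp)"
    using S by (simp add: nn_integral_add nn_integral_sum)
  also have "(\<integral>\<^sup>+c. ?h (c []) \<partial>PiM_pmf Cp) = emeasure (Cp []) {z. fst z \<noteq> snd z}"
    using nn_integral_PiM_indep_coordinate[OF measure_pmf.prob_space_axioms,
        where g="\<lambda>_. 1" and v="[]" and h="indicator {z. fst z \<noteq> snd z}"]
    by (simp add: prob_space.emeasure_space_1[OF prob_space_PiM_pmf])
  also have "\<dots> + (\<Sum>k<l. \<integral>\<^sup>+c. ?S k c \<partial>PiM_pmf Cp) \<le> ennreal d0 + (\<Sum>k<l. ennreal d1)"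
    by (intro add_mono root sum_mono nn_integral_discovery_mismatch_le[OF K other])
  finally show ?thesis by simp
qed

section \<open>Coupled explorations of GWP trees\<close>

lemma measurable_exploration_kernel:
  assumes K: "exploration_rule K"
  shows "(\<lambda>c. measure_pmf (exploration K c n))
      \<in> measurable (GWP D Ds) (subprob_algebra (count_space UNIV))"
  unfolding GWP_def
  by (rule measurable_finitely_determined[OF _
        finitely_determined_comp[OF finitely_determined_exploration[OF K]]])
     (simp_all add: measure_pmf_in_subprob_algebra)

lemma distr_bind_PiM_pmf_exploration:
  fixes P :: "nat list \<Rightarrow> 'a pmf" and g :: "'a \<Rightarrow> nat"
  assumes K: "exploration_rule K"
    and N: "N \<in> measurable (PiM_pmf P) (subprob_algebra (count_space UNIV))"
    and N_h: "\<And>c. distr (N c) (count_space UNIV) h = measure_pmf (exploration K (\<lambda>u. g (c u)) l)"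
    and G: "GWP D Ds = PiM_pmf (\<lambda>v. map_pmf g (P v))"
  shows "distr (PiM_pmf P \<bind> N) (count_space UNIV) h = expl_law K D Ds l"
proof -
  have ne: "space (PiM_pmf P) \<noteq> {}" by (simp add: space_PiM)
  have "distr (PiM_pmf P \<bind> N) (count_space UNIV) h
      = PiM_pmf P \<bind> (\<lambda>c. measure_pmf (exploration K (\<lambda>u. g (c u)) l))"
    by (simp add: distr_bind[OF N ne] N_h)
  also have "\<dots>
      = distr (PiM_pmf P) (GWP D Ds) (\<lambda>c v. g (c v)) \<bind> (\<lambda>c. measure_pmf (exploration K c l))"
    by (rule bind_distr[symmetric, OF measurable_map_PiM_pmf[of g P, folded G]
          measurable_exploration_kernel[OF K] ne])
  also have "distr (PiM_pmf P) (GWP D Ds) (\<lambda>c v. g (c v)) = GWP D Ds"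
    unfolding G by (rule distr_PiM_pmf_map)
  finally show ?thesis by (simp add: expl_law_def)
qed

definition coupled_exploration ::
  "(expl \<Rightarrow> nat list option pmf) \<Rightarrow> (nat list \<Rightarrow> (nat \<times> nat) pmf) \<Rightarrow> nat \<Rightarrow> (expl \<times> expl) measure" where
  "coupled_exploration K Cp l =
     PiM_pmf Cp \<bind> (\<lambda>c. measure_pmf (joint_exploration K (\<lambda>u. fst (c u)) (\<lambda>u. snd (c u)) l))"

lemma measurable_joint_exploration_kernel:
  assumes K: "exploration_rule K"
  shows "(\<lambda>c. measure_pmf (joint_exploration K (\<lambda>u. fst (c u)) (\<lambda>u. snd (c u)) l))
           \<in> measurable (PiM_pmf Cp) (subprob_algebra (count_space UNIV))"
  by (rule measurable_finitely_determined[OF _ finitely_determined_comp[OF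
    finitely_determined_joint_exploration[OF K]]])
     (simp_all add: measure_pmf_in_subprob_algebra)

lemma prob_space_coupled_exploration:
  assumes K: "exploration_rule K"
  shows "prob_space (coupled_exploration K Cp l)"
    and "sets (coupled_exploration K Cp l) = sets (count_space UNIV)"
proof -
  show "prob_space (coupled_exploration K Cp l)"
    unfolding coupled_exploration_def
    by (rule prob_space.prob_space_bind[OF prob_space_PiM_pmf _
      measurable_joint_exploration_kernel[OF K]])
       (simp add: measure_pmf.prob_space_axioms)
  show "sets (coupled_exploration K Cp l) = sets (count_space UNIV)"
    unfolding coupled_exploration_def by (rule sets_bind) (simp_all add: space_PiM)
qed

lemma distr_coupled_exploration:
  assumes K: "exploration_rule K"
  shows "GWP D Ds = PiM_pmf (\<lambda>v. map_pmf fst (Cp v)) \<Longrightarrow>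
           distr (coupled_exploration K Cp l) (count_space UNIV) fst = expl_law K D Ds l"
    and "GWP D Ds = PiM_pmf (\<lambda>v. map_pmf snd (Cp v)) \<Longrightarrow>
           distr (coupled_exploration K Cp l) (count_space UNIV) snd = expl_law K D Ds l"
  unfolding coupled_exploration_def
  by (rule distr_bind_PiM_pmf_exploration[OF K measurable_joint_exploration_kernel[OF K]];
      simp add: map_pmf_rep_eq[symmetric] map_fst_joint_exploration map_snd_joint_exploration)+

lemma measure_coupled_exploration_agree:
  fixes Cp :: "nat list \<Rightarrow> (nat \<times> nat) pmf"
  assumes K: "exploration_rule K"
    and root: "measure_pmf.prob (Cp []) {z. fst z \<noteq> snd z} \<le> d0"
    and other: "\<And>v. v \<noteq> [] \<Longrightarrow> measure_pmf.prob (Cp v) {z. fst z \<noteq> snd z} \<le> d1"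
  shows "measure (coupled_exploration K Cp l) {(X, Y). expl_agree X Y} \<ge> 1 - d0 - real l * d1"
proof -
  let ?\<mu> = "coupled_exploration K Cp l"
  let ?bad = "{p :: expl \<times> expl. \<not> expl_agree (fst p) (snd p)}"
  interpret \<mu>: prob_space ?\<mu> by (rule prob_space_coupled_exploration[OF K])
  have "0 \<le> d0" "0 \<le> d1" using root other[of "[0]"] measure_nonneg order_trans by blast+
  have "emeasure ?\<mu> ?bad
      = (\<integral>\<^sup>+c. emeasure (joint_exploration K (\<lambda>u. fst (c u)) (\<lambda>u. snd (c u)) l) ?bad \<partial>PiM_pmf Cp)"
    unfolding coupled_exploration_def
    by (rule emeasure_bind[OF _ measurable_joint_exploration_kernel[OF K]])
      (simp_all add: space_PiM)
  also have "\<dots> \<le> (\<integral>\<^sup>+c. emeasure (expl_state K (\<lambda>u. fst (c u)) l)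
        {s. \<not> fst s \<subseteq> {u. fst (c u) = snd (c u)}} \<partial>PiM_pmf Cp)"
    by (intro nn_integral_mono emeasure_joint_exploration_disagree[OF K])
  also have "\<dots> \<le> ennreal d0 + of_nat l * ennreal d1"
    using root other
    by (intro nn_integral_expl_state_mismatch_le[OF K])
      (simp_all add: measure_pmf.emeasure_eq_measure ennreal_leI)
  also have "\<dots> = ennreal (d0 + real l * d1)"
    using \<open>0 \<le> d0\<close> \<open>0 \<le> d1\<close> by (simp add: ennreal_plus ennreal_mult ennreal_of_nat_eq_real_of_nat)
  finally have "ennreal (measure ?\<mu> ?bad) \<le> ennreal (d0 + real l * d1)"
    by (simp only: \<mu>.emeasure_eq_measure)
  then have "measure ?\<mu> ?bad \<le> d0 + real l * d1"
    using \<open>0 \<le> d0\<close> \<open>0 \<le> d1\<close> by (subst (asm) ennreal_le_iff) simp_all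
  moreover have "{(X, Y). expl_agree X Y} = space ?\<mu> - ?bad"
    using sets_eq_imp_space_eq[OF prob_space_coupled_exploration(2)[OF K]] by auto
  ultimately show ?thesis
    using \<mu>.prob_compl[of ?bad] prob_space_coupled_exploration(2)[OF K] by simp
qed

lemma exists_coupling_expl_law:
  fixes Cp :: "nat list \<Rightarrow> (nat \<times> nat) pmf"
  assumes K: "exploration_rule K"
    and G1: "GWP D1 D1s = PiM_pmf (\<lambda>v. map_pmf fst (Cp v))"
    and G2: "GWP D2 D2s = PiM_pmf (\<lambda>v. map_pmf snd (Cp v))"
    and root: "measure_pmf.prob (Cp []) {z. fst z \<noteq> snd z} \<le> d0"
    and other: "\<And>v. v \<noteq> [] \<Longrightarrow> measure_pmf.prob (Cp v) {z. fst z \<noteq> snd z} \<le> d1"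
  shows "\<exists>\<mu> :: (expl \<times> expl) measure.
           prob_space \<mu> \<and> sets \<mu> = sets (count_space UNIV)
         \<and> distr \<mu> (count_space UNIV) fst = expl_law K D1 D1s l
         \<and> distr \<mu> (count_space UNIV) snd = expl_law K D2 D2s l
         \<and> measure \<mu> {(X, Y). expl_agree X Y} \<ge> 1 - d0 - real l * d1"
  using prob_space_coupled_exploration[OF K] distr_coupled_exploration(1)[OF K G1]
    distr_coupled_exploration(2)[OF K G2]
    measure_coupled_exploration_agree[where Cp=Cp and l=l, OF K root other]
  by (intro exI[of _ "coupled_exploration K Cp l"] conjI) simp_all

lemma GWP_eq_PiM_pmf: "GWP D Ds = PiM_pmf (\<lambda>v. if v = [] then D else map_pmf (\<lambda>k. k - 1) Ds)"
  unfolding GWP_def by (rule arg_cong[where f="PiM UNIV"]) (simp add: fun_eq_iff)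

theorem lemmaA2:
  fixes D1 D2 D1s D2s :: "nat pmf" and l :: nat and K :: "expl \<Rightarrow> nat list option pmf"
  assumes "0 \<notin> set_pmf D1s" and "0 \<notin> set_pmf D2s"
    and "l \<ge> 1"
    and "exploration_rule K"
  shows "\<exists>\<mu> :: (expl \<times> expl) measure.
           prob_space \<mu> \<and> sets \<mu> = sets (count_space UNIV)
         \<and> distr \<mu> (count_space UNIV) fst = expl_law K D1 D1s l
         \<and> distr \<mu> (count_space UNIV) snd = expl_law K D2 D2s l
         \<and> measure \<mu> {(X, Y). expl_agree X Y}
             \<ge> 1 - dTV D1 D2 - real l * dTV D1s D2s"
proof -
  note K = \<open>exploration_rule K\<close>
  obtain C0 where C0: "map_pmf fst C0 = D1" "map_pmf snd C0 = D2"
    "measure_pmf.prob C0 {z. fst z \<noteq> snd z} \<le> dTV D1 D2"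
    by (rule dTV_coupling)
  obtain C1 where C1: "map_pmf fst C1 = D1s" "map_pmf snd C1 = D2s"
    "measure_pmf.prob C1 {z. fst z \<noteq> snd z} \<le> dTV D1s D2s"
    by (rule dTV_coupling)
  define Cp where
    "Cp v = (if v = [] then C0 else map_pmf (map_prod (\<lambda>k. k - 1) (\<lambda>k. k - 1)) C1)"
    for v :: "nat list"
  have "map_pmf fst (Cp v) = (if v = [] then D1 else map_pmf (\<lambda>k. k - 1) D1s)"
    and "map_pmf snd (Cp v) = (if v = [] then D2 else map_pmf (\<lambda>k. k - 1) D2s)" for v
    by (simp_all add: Cp_def pmf.map_comp o_def flip: C0(1,2) C1(1,2))
  then have G1: "GWP D1 D1s = PiM_pmf (\<lambda>v. map_pmf fst (Cp v))"
    and G2: "GWP D2 D2s = PiM_pmf (\<lambda>v. map_pmf snd (Cp v))"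
    by (simp_all add: GWP_eq_PiM_pmf)
  have root: "measure_pmf.prob (Cp []) {z. fst z \<noteq> snd z} \<le> dTV D1 D2"
    using C0(3) by (simp add: Cp_def)
  have other: "measure_pmf.prob (Cp v) {z. fst z \<noteq> snd z} \<le> dTV D1s D2s" if "v \<noteq> []" for v
    using that C1(3) measure_map_prod_neq_le[of "\<lambda>k. k - 1" C1] by (simp add: Cp_def)
  show ?thesis by (rule exists_coupling_expl_law[OF K G1 G2 root other])
qed

end
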